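(* Consider a one-site PTM cascade with $n\ge1$ layers and positive total amounts. With $r=r_1/r_2$ as defined in the context, the BMSS value of $S_n^1$ is the smallest positive real root of the polynomial $P(s)=r_2(s)\,\overline{E}-r_1(s)$.
   Context: A one-site PTM cascade with $n$ layers has species $E=S_0^1$ and, for $i=1,\dots,n$, $S_i^0,S_i^1,F_i,Y_i^0,Y_i^1$, with reactions $S_{i-1}^1+S_i^0 \rightleftharpoons Y_i^0 \to S_{i-1}^1+S_i^1$ (rate constants $a_i^0,b_i^0,c_i^0$) and $F_i+S_i^1\rightleftharpoons Y_i^1\to F_i+S_i^0$ (rate constants $a_i^1,b_i^1,c_i^1$), all positive, mass-action kinetics. Put $\delta_i=a_i^1/(b_i^1+c_i^1)$, $\gamma_i=(c_i^1/c_i^0)\delta_i$, $\lambda_i=\frac{b_i^0+c_i^0}{a_i^0}\gamma_i$. Given total amounts $\overline{E},\overline{F}_i,\overline{S}_i$, a steady state is a real solution of: $Y_i^0=\gamma_iF_iS_i^1$, $Y_i^1=\delta_iF_iS_i^1$, $\lambda_iF_iS_i^1=S_i^0S_{i-1}^1$, $\overline{F}_i=F_i+Y_i^1$, $\overline{S}_i=S_i^0+S_i^1+Y_i^0+Y_i^1+Y_{i+1}^0$ ($i=1,\dots,n$, $Y_{n+1}^0:=0$), $\overline{E}=E+Y_1^0$. A BMSS is a steady state with positive total amounts and all concentrations nonnegative; it exists and is unique. Define $d_i(x,y)=(\overline{S}_i-y)-x-\overline{F}_i(\delta_i+\gamma_i)x+\delta_i(\overline{S}_i-y)x-\delta_ix^2$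 and $g_i^Y(x)=\frac{\gamma_i\overline{F}_ix}{1+\delta_ix}$; define rational functions of $s$ recursively by $f_n(s)=s$, $f_{n+1}^Y(s)=0$, and for $i=n,\dots,1$: $f_i^Y(s)=g_i^Y(f_i(s))$, $f_{i-1}(s)=\frac{\lambda_i\overline{F}_if_i(s)}{d_i(f_i(s),f_{i+1}^Y(s))}$. Let $r(s)=f_0(s)+f_1^Y(s)$ and write $r=r_1/r_2$ in reduced form with $r_1,r_2\in\mathbb{R}[s]$. *)

theory Defs
  imports "HOL-Computational_Algebra.Computational_Algebra"
begin

(* Rational functions in s over the reals are modelled as  real poly fract
   (fraction field of R[s]).  The variable s is  Fract [:0,1:] 1. *)

type_synonym ratfun = "real poly fract"

definition rconst :: "real \<Rightarrow> ratfun" where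
  "rconst c = Fract [:c:] 1"

definition rvar :: ratfun where
  "rvar = Fract [:0, 1:] 1"

definition delta :: "(nat \<Rightarrow> real) \<Rightarrow> (nat \<Rightarrow> real) \<Rightarrow> (nat \<Rightarrow> real) \<Rightarrow> nat \<Rightarrow> real" where
  "delta a1 b1 c1 i = a1 i / (b1 i + c1 i)"

definition gamma :: "(nat \<Rightarrow> real) \<Rightarrow> (nat \<Rightarrow> real) \<Rightarrow> (nat \<Rightarrow> real) \<Rightarrow> (nat \<Rightarrow> real) \<Rightarrow> nat \<Rightarrow> real" where
  "gamma c0 a1 b1 c1 i = (c1 i / c0 i) * delta a1 b1 c1 i"

definition lambda :: "(nat \<Rightarrow> real) \<Rightarrow> (nat \<Rightarrow> real) \<Rightarrow> (nat \<Rightarrow> real) \<Rightarrow> (nat \<Rightarrow> real) \<Rightarrow> (nat \<Rightarrow> real) \<Rightarrow> (nat \<Rightarrow> real) \<Rightarrow> nat \<Rightarrow> real" where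
  "lambda a0 b0 c0 a1 b1 c1 i = ((b0 i + c0 i) / a0 i) * gamma c0 a1 b1 c1 i"

definition dfun :: "real \<Rightarrow> real \<Rightarrow> real \<Rightarrow> real \<Rightarrow> ratfun \<Rightarrow> ratfun \<Rightarrow> ratfun" where
  "dfun dl gm Fb Sb x y =
     (rconst Sb - y) - x - rconst (Fb * (dl + gm)) * x + rconst dl * (rconst Sb - y) * x
     - rconst dl * x ^ 2"

definition gYfun :: "real \<Rightarrow> real \<Rightarrow> real \<Rightarrow> ratfun \<Rightarrow> ratfun" where
  "gYfun dl gm Fb x = rconst (gm * Fb) * x / (1 + rconst dl * x)"

(* casc n dl gm lm Fb Sb k = (f_{n-k}, f^Y_{n-k+1}) for k = 0..n;
   f_n = s, f^Y_{n+1} = 0, and for i = n-k: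
   f^Y_i = g_i^Y(f_i),  f_{i-1} = lambda_i Fbar_i f_i / d_i(f_i, f^Y_{i+1}) *)
fun casc :: "nat \<Rightarrow> (nat \<Rightarrow> real) \<Rightarrow> (nat \<Rightarrow> real) \<Rightarrow> (nat \<Rightarrow> real) \<Rightarrow> (nat \<Rightarrow> real)
              \<Rightarrow> (nat \<Rightarrow> real) \<Rightarrow> nat \<Rightarrow> ratfun \<times> ratfun" where
  "casc n dl gm lm Fb Sb 0 = (rvar, 0)"
| "casc n dl gm lm Fb Sb (Suc k) =
     (let i = n - k; fi = fst (casc n dl gm lm Fb Sb k); fYnext = snd (casc n dl gm lm Fb Sb k)
      in (rconst (lm i * Fb i) * fi / dfun (dl i) (gm i) (Fb i) (Sb i) fi fYnext,
          gYfun (dl i) (gm i) (Fb i) fi))"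

definition rfun :: "nat \<Rightarrow> (nat \<Rightarrow> real) \<Rightarrow> (nat \<Rightarrow> real) \<Rightarrow> (nat \<Rightarrow> real) \<Rightarrow> (nat \<Rightarrow> real)
              \<Rightarrow> (nat \<Rightarrow> real) \<Rightarrow> ratfun" where
  "rfun n dl gm lm Fb Sb = fst (casc n dl gm lm Fb Sb n) + snd (casc n dl gm lm Fb Sb n)"

(* Steady state of the n-layer one-site PTM cascade.  Concentrations:
   S0 i = S_i^0, S1 i = S_i^1 (with S1 0 = E), F i = F_i, Y0 i = Y_i^0, Y1 i = Y_i^1,
   for i = 1..n.  Y_{n+1}^0 := 0. *)
definition steady_state ::
  "nat \<Rightarrow> (nat \<Rightarrow> real) \<Rightarrow> (nat \<Rightarrow> real) \<Rightarrow> (nat \<Rightarrow> real) \<Rightarrow> real \<Rightarrow> (nat \<Rightarrow> real) \<Rightarrow> (nat \<Rightarrow> real)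
   \<Rightarrow> (nat \<Rightarrow> real) \<Rightarrow> (nat \<Rightarrow> real) \<Rightarrow> (nat \<Rightarrow> real) \<Rightarrow> (nat \<Rightarrow> real) \<Rightarrow> (nat \<Rightarrow> real) \<Rightarrow> bool" where
  "steady_state n dl gm lm Eb Fb Sb S0 S1 F Y0 Y1 \<longleftrightarrow>
     (\<forall>i\<in>{1..n}.
        Y0 i = gm i * F i * S1 i \<and>
        Y1 i = dl i * F i * S1 i \<and>
        lm i * F i * S1 i = S0 i * S1 (i - 1) \<and>
        Fb i = F i + Y1 i \<and>
        Sb i = S0 i + S1 i + Y0 i + Y1 i + (if i = n then 0 else Y0 (i + 1))) \<and>
     Eb = S1 0 + Y0 1"

definition bmss ::
  "nat \<Rightarrow> (nat \<Rightarrow> real) \<Rightarrow> (nat \<Rightarrow> real) \<Rightarrow> (nat \<Rightarrow> real) \<Rightarrow> real \<Rightarrow> (nat \<Rightarrow> real) \<Rightarrow> (nat \<Rightarrow> real)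
   \<Rightarrow> (nat \<Rightarrow> real) \<Rightarrow> (nat \<Rightarrow> real) \<Rightarrow> (nat \<Rightarrow> real) \<Rightarrow> (nat \<Rightarrow> real) \<Rightarrow> (nat \<Rightarrow> real) \<Rightarrow> bool" where
  "bmss n dl gm lm Eb Fb Sb S0 S1 F Y0 Y1 \<longleftrightarrow>
     steady_state n dl gm lm Eb Fb Sb S0 S1 F Y0 Y1 \<and>
     S1 0 \<ge> 0 \<and>
     (\<forall>i\<in>{1..n}. S0 i \<ge> 0 \<and> S1 i \<ge> 0 \<and> F i \<ge> 0 \<and> Y0 i \<ge> 0 \<and> Y1 i \<ge> 0)"

end

theory Submission
  imports Defs "HOL-Computational_Algebra.Field_as_Ring"
begin

(* The rational function r is built from the variable s by the
   recursion f_{i-1} = lambda_i Fbar_i f_i / d_i(f_i, f^Y_{i+1}), f^Y_i = g^Y_i(f_i).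
   Running the same recursion on real numbers, starting from a real s, gives
   real values x_k, y_k (the cascade evaluated at s), and as long as no
   denominator vanishes these are the values of the rational functions at s.

   Compare this real cascade with the BMSS.  Layer by layer (from i = n down to 1)
   one shows: if 0 < x <= S_i^1 and 0 <= y <= Y_{i+1}^0, then the next values
   satisfy 0 < x' <= S_{i-1}^1 and 0 <= y' <= Y_i^0, with strict inequality for x'
   when x < S_i^1, and with equality throughout when started from the steady
   state itself.  Hence r(s) < S_0^1 + Y_1^0 = Ebar for 0 < s < S_n^1, and
   r(S_n^1) = Ebar.  Since r = r_1/r_2 is reduced, r_2 does not vanish where r
   has a value, so P = Ebar r_2 - r_1 vanishes at S_n^1 but nowhere in (0, S_n^1). *)

(* This is a
   relation rather than a function, as it is only defined where q is regular. *)
definition has_value_at :: "real \<Rightarrow> ratfun \<Rightarrow> real \<Rightarrow> bool" where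
  "has_value_at s q v \<longleftrightarrow> (\<exists>p d. poly d s \<noteq> 0 \<and> q = Fract p d \<and> v = poly p s / poly d s)"

lemma has_value_atI: "poly d s \<noteq> 0 \<Longrightarrow> has_value_at s (Fract p d) (poly p s / poly d s)"
  unfolding has_value_at_def by blast

lemma has_value_atE:
  assumes "has_value_at s q v"
  obtains p d where "d \<noteq> 0" "poly d s \<noteq> 0" "q = Fract p d" "v = poly p s / poly d s"
proof -
  from assms obtain p d where "poly d s \<noteq> 0" "q = Fract p d" "v = poly p s / poly d s"
    unfolding has_value_at_def by blast
  moreover from this have "d \<noteq> 0"
    by auto
  ultimately show ?thesis
    using that by blast
qed

lemma has_value_at_const: "has_value_at s (rconst c) c"
  using has_value_atI[of 1 s "[:c:]"] by (simp add: rconst_def)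

lemma has_value_at_var: "has_value_at s rvar s"
  using has_value_atI[of 1 s "[:0, 1:]"] by (simp add: rvar_def)

lemma has_value_at_zero: "has_value_at s 0 0"
  using has_value_atI[of 1 s 0] by (simp add: Zero_fract_def)

lemma has_value_at_one: "has_value_at s 1 1"
  using has_value_atI[of 1 s 1] by (simp add: One_fract_def)

lemma has_value_at_pairE:
  assumes "has_value_at s q1 v1" "has_value_at s q2 v2"
  obtains p1 d1 p2 d2 where "d1 \<noteq> 0" "poly d1 s \<noteq> 0" "q1 = Fract p1 d1" "v1 = poly p1 s / poly d1 s"
    and "d2 \<noteq> 0" "poly d2 s \<noteq> 0" "q2 = Fract p2 d2" "v2 = poly p2 s / poly d2 s"
  using assms by (metis has_value_atE)

lemma has_value_at_add:
  assumes "has_value_at s q1 v1" "has_value_at s q2 v2"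
  shows "has_value_at s (q1 + q2) (v1 + v2)"
proof -
  obtain p1 d1 p2 d2 where "d1 \<noteq> 0" "poly d1 s \<noteq> 0" "q1 = Fract p1 d1" "v1 = poly p1 s / poly d1 s"
    "d2 \<noteq> 0" "poly d2 s \<noteq> 0" "q2 = Fract p2 d2" "v2 = poly p2 s / poly d2 s"
    using assms by (rule has_value_at_pairE)
  moreover from this have "has_value_at s (Fract (p1 * d2 + p2 * d1) (d1 * d2))
      (poly (p1 * d2 + p2 * d1) s / poly (d1 * d2) s)"
    by (intro has_value_atI) simp
  ultimately show ?thesis
    by (simp add: add_frac_eq)
qed

lemma has_value_at_diff:
  assumes "has_value_at s q1 v1" "has_value_at s q2 v2"
  shows "has_value_at s (q1 - q2) (v1 - v2)"
proof -
  obtain p1 d1 p2 d2 where "d1 \<noteq> 0" "poly d1 s \<noteq> 0" "q1 = Fract p1 d1" "v1 = poly p1 s / poly d1 s"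
    "d2 \<noteq> 0" "poly d2 s \<noteq> 0" "q2 = Fract p2 d2" "v2 = poly p2 s / poly d2 s"
    using assms by (rule has_value_at_pairE)
  moreover from this have "has_value_at s (Fract (p1 * d2 - p2 * d1) (d1 * d2))
      (poly (p1 * d2 - p2 * d1) s / poly (d1 * d2) s)"
    by (intro has_value_atI) simp
  ultimately show ?thesis
    by (simp add: diff_frac_eq)
qed

lemma has_value_at_mult:
  assumes "has_value_at s q1 v1" "has_value_at s q2 v2"
  shows "has_value_at s (q1 * q2) (v1 * v2)"
proof -
  obtain p1 d1 p2 d2 where "d1 \<noteq> 0" "poly d1 s \<noteq> 0" "q1 = Fract p1 d1" "v1 = poly p1 s / poly d1 s"
    "d2 \<noteq> 0" "poly d2 s \<noteq> 0" "q2 = Fract p2 d2" "v2 = poly p2 s / poly d2 s"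
    using assms by (rule has_value_at_pairE)
  moreover from this have "has_value_at s (Fract (p1 * p2) (d1 * d2))
      (poly (p1 * p2) s / poly (d1 * d2) s)"
    by (intro has_value_atI) simp
  ultimately show ?thesis
    by simp
qed

lemma has_value_at_divide:
  assumes "has_value_at s q1 v1" "has_value_at s q2 v2" "v2 \<noteq> 0"
  shows "has_value_at s (q1 / q2) (v1 / v2)"
proof -
  obtain p1 d1 p2 d2 where "d1 \<noteq> 0" "poly d1 s \<noteq> 0" "q1 = Fract p1 d1" "v1 = poly p1 s / poly d1 s"
    "d2 \<noteq> 0" "poly d2 s \<noteq> 0" "q2 = Fract p2 d2" "v2 = poly p2 s / poly d2 s"
    using assms(1,2) by (rule has_value_at_pairE)
  moreover from this assms(3) have "p2 \<noteq> 0" "poly p2 s \<noteq> 0"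
    by auto
  moreover from calculation have "has_value_at s (Fract (p1 * d2) (d1 * p2))
      (poly (p1 * d2) s / poly (d1 * p2) s)"
    by (intro has_value_atI) simp
  ultimately show ?thesis
    by simp
qed

(* A reduced representation r1/r2 is regular wherever the rational function has a
   value: the denominator of any other representation is a multiple of r2.
   (Coprimality in real poly uses the gcd structure from Field_as_Ring.) *)
lemma has_value_at_reduced:
  assumes "has_value_at s (Fract r1 r2) v" "r2 \<noteq> 0" "coprime r1 r2"
  shows "poly r2 s \<noteq> 0" "v = poly r1 s / poly r2 s"
proof -
  obtain p d where h: "d \<noteq> 0" "poly d s \<noteq> 0" "Fract r1 r2 = Fract p d" "v = poly p s / poly d s"
    using assms(1) by (rule has_value_atE)
  have cross: "d * r1 = r2 * p"
    using h(3) eq_fract(1)[OF assms(2) h(1)] by (simp add: ac_simps)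
  have "r2 dvd d * r1" unfolding cross by simp
  moreover have "coprime r2 r1"
    using assms(3) by (rule coprime_commute[THEN iffD1])
  ultimately have "r2 dvd d"
    using coprime_dvd_mult_left_iff by blast
  then show r2s: "poly r2 s \<noteq> 0"
    using h(2) by (auto elim: dvdE)
  have "poly d s * poly r1 s = poly r2 s * poly p s"
    using arg_cong[OF cross, of "\<lambda>q. poly q s"] by simp
  then show "v = poly r1 s / poly r2 s"
    using h(2,4) r2s by (simp add: frac_eq_eq ac_simps)
qed

definition d_real :: "real \<Rightarrow> real \<Rightarrow> real \<Rightarrow> real \<Rightarrow> real \<Rightarrow> real \<Rightarrow> real" where
  "d_real dl gm Fb Sb x y =
     (Sb - y) - x - (Fb * (dl + gm)) * x + dl * (Sb - y) * x - dl * x ^ 2"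

definition gY_real :: "real \<Rightarrow> real \<Rightarrow> real \<Rightarrow> real \<Rightarrow> real" where
  "gY_real dl gm Fb x = gm * Fb * x / (1 + dl * x)"

lemma has_value_at_dfun:
  assumes "has_value_at s x u" "has_value_at s y w"
  shows "has_value_at s (dfun dl gm Fb Sb x y) (d_real dl gm Fb Sb u w)"
  unfolding dfun_def d_real_def power2_eq_square
  by (intro has_value_at_add has_value_at_diff has_value_at_mult has_value_at_const assms)

lemma has_value_at_gYfun:
  assumes "has_value_at s x u" "1 + dl * u \<noteq> 0"
  shows "has_value_at s (gYfun dl gm Fb x) (gY_real dl gm Fb u)"
  unfolding gYfun_def gY_real_def
  by (intro has_value_at_divide has_value_at_add has_value_at_mult has_value_at_const
      has_value_at_one assms)

fun casc_real :: "nat \<Rightarrow> (nat \<Rightarrow> real) \<Rightarrow> (nat \<Rightarrow> real) \<Rightarrow> (nat \<Rightarrow> real) \<Rightarrow> (nat \<Rightarrow> real)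
                  \<Rightarrow> (nat \<Rightarrow> real) \<Rightarrow> real \<Rightarrow> nat \<Rightarrow> real \<times> real" where
  "casc_real n dl gm lm Fb Sb s 0 = (s, 0)"
| "casc_real n dl gm lm Fb Sb s (Suc k) =
     (let i = n - k; x = fst (casc_real n dl gm lm Fb Sb s k); y = snd (casc_real n dl gm lm Fb Sb s k)
      in (lm i * Fb i * x / d_real (dl i) (gm i) (Fb i) (Sb i) x y, gY_real (dl i) (gm i) (Fb i) x))"

lemma casc_has_value:
  assumes "\<And>j. j < k \<Longrightarrow>
      d_real (dl (n - j)) (gm (n - j)) (Fb (n - j)) (Sb (n - j))
        (fst (casc_real n dl gm lm Fb Sb s j)) (snd (casc_real n dl gm lm Fb Sb s j)) \<noteq> 0 \<and>
      1 + dl (n - j) * fst (casc_real n dl gm lm Fb Sb s j) \<noteq> 0"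
  shows "has_value_at s (fst (casc n dl gm lm Fb Sb k)) (fst (casc_real n dl gm lm Fb Sb s k)) \<and>
         has_value_at s (snd (casc n dl gm lm Fb Sb k)) (snd (casc_real n dl gm lm Fb Sb s k))"
  using assms
proof (induction k)
  case 0
  then show ?case by (simp add: has_value_at_var has_value_at_zero)
next
  case (Suc k)
  then have IH: "has_value_at s (fst (casc n dl gm lm Fb Sb k)) (fst (casc_real n dl gm lm Fb Sb s k))"
      "has_value_at s (snd (casc n dl gm lm Fb Sb k)) (snd (casc_real n dl gm lm Fb Sb s k))"
    and nz: "d_real (dl (n - k)) (gm (n - k)) (Fb (n - k)) (Sb (n - k))
        (fst (casc_real n dl gm lm Fb Sb s k)) (snd (casc_real n dl gm lm Fb Sb s k)) \<noteq> 0"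
      "1 + dl (n - k) * fst (casc_real n dl gm lm Fb Sb s k) \<noteq> 0"
    by auto
  show ?case
    by (simp add: Let_def has_value_at_divide has_value_at_mult has_value_at_const
        has_value_at_dfun has_value_at_gYfun IH nz)
qed

(* A layer of the cascade at a positive steady state: F, S, S0 are F_i, S_i^1,
   S_i^0, Sp = S_{i-1}^1 is the upstream kinase and C = Y_{i+1}^0 the complex
   formed with the downstream layer.  The equations are the steady-state
   equations of layer i after eliminating Y_i^0 and Y_i^1. *)
definition steady_layer ::
  "real \<Rightarrow> real \<Rightarrow> real \<Rightarrow> real \<Rightarrow> real \<Rightarrow> real \<Rightarrow> real \<Rightarrow> real \<Rightarrow> real \<Rightarrow> real \<Rightarrow> bool" where
  "steady_layer dl gm lm Fb Sb F S S0 Sp C \<longleftrightarrow>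
     0 < dl \<and> 0 < gm \<and> 0 < lm \<and> 0 < F \<and> 0 < S \<and> 0 < S0 \<and>
     Fb = F * (1 + dl * S) \<and> Sb = S0 + S + gm * F * S + dl * F * S + C \<and> lm * F * S = S0 * Sp"

lemma d_real_expand:
  "d_real dl gm Fb Sb x y = (1 + dl * x) * (Sb - y - x) - (dl + gm) * (Fb * x)"
  unfolding d_real_def by (simp add: algebra_simps power2_eq_square)

lemma layer_fixed_point:
  assumes L: "steady_layer dl gm lm Fb Sb F S S0 Sp C"
  shows "lm * Fb * S / d_real dl gm Fb Sb S C = Sp" "gY_real dl gm Fb S = gm * F * S"
proof -
  from L have pos: "0 < dl" "0 < F" "0 < S" "0 < S0"
    and Fb: "Fb = F * (1 + dl * S)" and Sb: "Sb = S0 + S + gm * F * S + dl * F * S + C"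
    and Sp: "lm * F * S = S0 * Sp"
    unfolding steady_layer_def by auto
  have dS: "0 < 1 + dl * S"
    using pos by (simp add: add_pos_pos)
  have d: "d_real dl gm Fb Sb S C = (1 + dl * S) * S0"
    unfolding d_real_expand Fb Sb by (simp add: algebra_simps)
  have "lm * Fb * S / d_real dl gm Fb Sb S C = (lm * F * S) * (1 + dl * S) / (S0 * (1 + dl * S))"
    unfolding d by (simp add: Fb ac_simps)
  also have "\<dots> = lm * F * S / S0"
    using dS by simp
  also have "\<dots> = Sp"
    using Sp pos by simp
  finally show "lm * Fb * S / d_real dl gm Fb Sb S C = Sp" .
  show "gY_real dl gm Fb S = gm * F * S"
    using dS unfolding gY_real_def Fb by (simp add: field_simps)
qed

lemma saturation_mono:
  fixes dl x S :: real
  assumes "0 \<le> dl" "0 \<le> x" "x \<le> S"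
  shows "x / (1 + dl * x) \<le> S / (1 + dl * S)"
proof -
  have "0 < 1 + dl * x" "0 < 1 + dl * S"
    using assms by (simp_all add: add_pos_nonneg)
  moreover have "x * (1 + dl * S) \<le> S * (1 + dl * x)"
    using assms by (simp add: algebra_simps)
  ultimately show ?thesis
    by (simp add: divide_simps)
qed

lemma saturation_strict_mono:
  fixes dl x S :: real
  assumes "0 \<le> dl" "0 \<le> x" "x < S"
  shows "x / (1 + dl * x) < S / (1 + dl * S)"
proof -
  have "0 < 1 + dl * x" "0 < 1 + dl * S"
    using assms by (simp_all add: add_pos_nonneg)
  moreover have "x * (1 + dl * S) < S * (1 + dl * x)"
    using assms by (simp add: algebra_simps)
  ultimately show ?thesis
    by (simp add: divide_simps)
qed

lemma layer_flux_bound: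
  assumes L: "steady_layer dl gm lm Fb Sb F S S0 Sp C" and x: "0 \<le> x" "x \<le> S"
  shows "Fb * x / (1 + dl * x) \<le> F * S"
    and "x < S \<Longrightarrow> Fb * x / (1 + dl * x) < F * S"
proof -
  from L have pos: "0 < dl" "0 < F" "0 < S" and Fb: "Fb = F * (1 + dl * S)"
    unfolding steady_layer_def by auto
  have dS: "0 < 1 + dl * S"
    using pos by (simp add: add_pos_pos)
  then have Fb_pos: "0 < Fb" and FS: "F * S = Fb * (S / (1 + dl * S))"
    using pos unfolding Fb by simp_all
  have flux: "Fb * x / (1 + dl * x) = Fb * (x / (1 + dl * x))"
    by simp
  show "Fb * x / (1 + dl * x) \<le> F * S"
    unfolding flux FS using pos x Fb_pos by (intro mult_left_mono saturation_mono) simp_all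
  show "Fb * x / (1 + dl * x) < F * S" if "x < S"
    unfolding flux FS using pos x that Fb_pos by (intro mult_strict_left_mono saturation_strict_mono) simp_all
qed

lemma layer_denominator_bound:
  assumes L: "steady_layer dl gm lm Fb Sb F S S0 Sp C"
    and x: "0 \<le> x" "x \<le> S" and y: "y \<le> C"
  shows "(1 + dl * x) * S0 \<le> d_real dl gm Fb Sb x y"
proof -
  from L have pos: "0 < dl" "0 < gm" and Sb: "Sb = S0 + S + gm * F * S + dl * F * S + C"
    unfolding steady_layer_def by auto
  have dx: "0 < 1 + dl * x"
    using pos x by (simp add: add_pos_nonneg)
  define w where "w = Fb * x / (1 + dl * x)"
  have "w \<le> F * S"
    unfolding w_def by (rule layer_flux_bound(1)[OF L x])
  then have "(dl + gm) * w \<le> (dl + gm) * (F * S)"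
    using pos by (simp add: mult_left_mono)
  then have "S0 \<le> Sb - y - x - (dl + gm) * w"
    unfolding Sb using x y by (simp add: algebra_simps)
  then have "(1 + dl * x) * S0 \<le> (1 + dl * x) * (Sb - y - x - (dl + gm) * w)"
    using dx by (simp add: mult_left_mono)
  also have "\<dots> = d_real dl gm Fb Sb x y"
    unfolding d_real_expand w_def using dx by (simp add: field_simps)
  finally show ?thesis .
qed

lemma layer_step:
  assumes L: "steady_layer dl gm lm Fb Sb F S S0 Sp C"
    and x: "0 < x" "x \<le> S" and y: "0 \<le> y" "y \<le> C"
  shows "0 < d_real dl gm Fb Sb x y"
    and "0 < lm * Fb * x / d_real dl gm Fb Sb x y"
    and "lm * Fb * x / d_real dl gm Fb Sb x y \<le> Sp"
    and "x < S \<Longrightarrow> lm * Fb * x / d_real dl gm Fb Sb x y < Sp"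
    and "0 \<le> gY_real dl gm Fb x" "gY_real dl gm Fb x \<le> gm * F * S"
proof -
  from L have pos: "0 < dl" "0 < gm" "0 < lm" "0 < F" "0 < S" "0 < S0"
    and Fb: "Fb = F * (1 + dl * S)" and Sp: "Sp = lm * (F * S) / S0"
    unfolding steady_layer_def by (auto simp: field_simps)
  have dx: "0 < 1 + dl * x"
    using pos x by (simp add: add_pos_pos)
  have Fb_pos: "0 < Fb"
    using pos Fb by (simp add: add_pos_pos)
  define w where "w = Fb * x / (1 + dl * x)"
  have w_pos: "0 < w"
    unfolding w_def using Fb_pos x dx by simp
  note flux = layer_flux_bound[OF L less_imp_le[OF x(1)] x(2), folded w_def]
  note d_ge = layer_denominator_bound[OF L less_imp_le[OF x(1)] x(2) y(2)]
  have lower_pos: "0 < (1 + dl * x) * S0"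
    using dx pos by simp
  then show d_pos: "0 < d_real dl gm Fb Sb x y"
    using d_ge by linarith
  show "0 < lm * Fb * x / d_real dl gm Fb Sb x y"
    using pos Fb_pos x d_pos by (simp add: divide_pos_pos)
  have "lm * Fb * x / d_real dl gm Fb Sb x y \<le> lm * Fb * x / ((1 + dl * x) * S0)"
    using pos Fb_pos x by (intro divide_left_mono[OF d_ge]) (simp_all add: d_pos lower_pos)
  also have "\<dots> = lm * w / S0"
    unfolding w_def by simp
  finally have x'_le: "lm * Fb * x / d_real dl gm Fb Sb x y \<le> lm * w / S0" .
  have "lm * w / S0 \<le> lm * (F * S) / S0"
    using flux(1) pos by (intro divide_right_mono mult_left_mono) simp_all
  then show "lm * Fb * x / d_real dl gm Fb Sb x y \<le> Sp"
    using x'_le unfolding Sp by linarith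
  show "lm * Fb * x / d_real dl gm Fb Sb x y < Sp" if "x < S"
  proof -
    have "lm * w / S0 < lm * (F * S) / S0"
      using flux(2)[OF that] pos by (intro divide_strict_right_mono mult_strict_left_mono) simp_all
    then show ?thesis
      using x'_le unfolding Sp by linarith
  qed
  have gY_eq: "gY_real dl gm Fb x = gm * w"
    unfolding gY_real_def w_def by simp
  show "0 \<le> gY_real dl gm Fb x"
    unfolding gY_eq using pos w_pos by simp
  show "gY_real dl gm Fb x \<le> gm * F * S"
    unfolding gY_eq using pos flux(1) by (simp add: mult.assoc)
qed

(* A positive steady state of the whole cascade, layer by layer: C i stands for
   Y_{i+1}^0 (with C n = 0), so that C (i - 1) = Y_i^0 = gamma_i F_i S_i^1. *)
definition steady_chain ::
  "nat \<Rightarrow> (nat \<Rightarrow> real) \<Rightarrow> (nat \<Rightarrow> real) \<Rightarrow> (nat \<Rightarrow> real) \<Rightarrow> (nat \<Rightarrow> real) \<Rightarrow> (nat \<Rightarrow> real)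
   \<Rightarrow> (nat \<Rightarrow> real) \<Rightarrow> (nat \<Rightarrow> real) \<Rightarrow> (nat \<Rightarrow> real) \<Rightarrow> (nat \<Rightarrow> real) \<Rightarrow> bool" where
  "steady_chain n dl gm lm Fb Sb F S1 S0 C \<longleftrightarrow> C n = 0 \<and>
     (\<forall>i\<in>{1..n}. steady_layer (dl i) (gm i) (lm i) (Fb i) (Sb i) (F i) (S1 i) (S0 i) (S1 (i - 1)) (C i) \<and>
                 C (i - 1) = gm i * F i * S1 i)"

lemma steady_chainD:
  assumes "steady_chain n dl gm lm Fb Sb F S1 S0 C" "i \<in> {1..n}"
  shows "steady_layer (dl i) (gm i) (lm i) (Fb i) (Sb i) (F i) (S1 i) (S0 i) (S1 (i - 1)) (C i)"
    and "C (i - 1) = gm i * F i * S1 i"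
  using assms unfolding steady_chain_def by auto

lemma casc_real_fixed_point:
  assumes chain: "steady_chain n dl gm lm Fb Sb F S1 S0 C" and "k \<le> n"
  shows "casc_real n dl gm lm Fb Sb (S1 n) k = (S1 (n - k), C (n - k))"
  using \<open>k \<le> n\<close>
proof (induction k)
  case 0
  then show ?case
    using chain by (simp add: steady_chain_def)
next
  case (Suc k)
  define i where "i = n - k"
  have i: "i \<in> {1..n}" "n - Suc k = i - 1"
    using Suc.prems unfolding i_def by auto
  note L = steady_chainD[OF chain i(1)]
  have "casc_real n dl gm lm Fb Sb (S1 n) k = (S1 i, C i)"
    using Suc unfolding i_def by simp
  then show ?case
    using layer_fixed_point[OF L(1)] L(2) by (simp add: Let_def i(2) flip: i_def)
qed

lemma casc_real_bounds:
  assumes chain: "steady_chain n dl gm lm Fb Sb F S1 S0 C"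
    and s: "0 < s" "s \<le> S1 n" and "k \<le> n"
  shows "0 < fst (casc_real n dl gm lm Fb Sb s k) \<and> fst (casc_real n dl gm lm Fb Sb s k) \<le> S1 (n - k) \<and>
         (s < S1 n \<longrightarrow> fst (casc_real n dl gm lm Fb Sb s k) < S1 (n - k)) \<and>
         0 \<le> snd (casc_real n dl gm lm Fb Sb s k) \<and> snd (casc_real n dl gm lm Fb Sb s k) \<le> C (n - k)"
  using \<open>k \<le> n\<close>
proof (induction k)
  case 0
  then show ?case
    using chain s by (simp add: steady_chain_def)
next
  case (Suc k)
  define i where "i = n - k"
  define x where "x = fst (casc_real n dl gm lm Fb Sb s k)"
  define y where "y = snd (casc_real n dl gm lm Fb Sb s k)"
  have i: "i \<in> {1..n}" "n - Suc k = i - 1"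
    using Suc.prems unfolding i_def by auto
  have IH: "0 < x" "x \<le> S1 i" "s < S1 n \<longrightarrow> x < S1 i" "0 \<le> y" "y \<le> C i"
    using Suc unfolding x_def y_def i_def by auto
  note L = steady_chainD[OF chain i(1)]
  note step = layer_step[OF L(1) IH(1,2,4,5)]
  have "casc_real n dl gm lm Fb Sb s (Suc k) =
      (lm i * Fb i * x / d_real (dl i) (gm i) (Fb i) (Sb i) x y, gY_real (dl i) (gm i) (Fb i) x)"
    unfolding x_def y_def i_def by (simp add: Let_def)
  then show ?case
    using step IH(3) L(2) by (simp add: i(2))
qed

lemma casc_real_denominators_pos:
  assumes chain: "steady_chain n dl gm lm Fb Sb F S1 S0 C"
    and s: "0 < s" "s \<le> S1 n" and "j < n"
  shows "0 < d_real (dl (n - j)) (gm (n - j)) (Fb (n - j)) (Sb (n - j))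
               (fst (casc_real n dl gm lm Fb Sb s j)) (snd (casc_real n dl gm lm Fb Sb s j))"
    and "0 < 1 + dl (n - j) * fst (casc_real n dl gm lm Fb Sb s j)"
proof -
  have i: "n - j \<in> {1..n}"
    using \<open>j < n\<close> by auto
  note L = steady_chainD(1)[OF chain i]
  note B = casc_real_bounds[OF chain s, of j]
  show "0 < d_real (dl (n - j)) (gm (n - j)) (Fb (n - j)) (Sb (n - j))
               (fst (casc_real n dl gm lm Fb Sb s j)) (snd (casc_real n dl gm lm Fb Sb s j))"
    using layer_step(1)[OF L] B \<open>j < n\<close> by simp
  have "0 < dl (n - j)"
    using L unfolding steady_layer_def by simp
  then show "0 < 1 + dl (n - j) * fst (casc_real n dl gm lm Fb Sb s j)"
    using B \<open>j < n\<close> by (simp add: add_pos_pos)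
qed

lemma rfun_value:
  assumes chain: "steady_chain n dl gm lm Fb Sb F S1 S0 C"
    and s: "0 < s" "s \<le> S1 n"
    and r: "rfun n dl gm lm Fb Sb = Fract r1 r2" "r2 \<noteq> 0" "coprime r1 r2"
  shows "poly r2 s \<noteq> 0"
    and "poly r1 s / poly r2 s =
           fst (casc_real n dl gm lm Fb Sb s n) + snd (casc_real n dl gm lm Fb Sb s n)"
proof -
  have "has_value_at s (fst (casc n dl gm lm Fb Sb n)) (fst (casc_real n dl gm lm Fb Sb s n)) \<and>
        has_value_at s (snd (casc n dl gm lm Fb Sb n)) (snd (casc_real n dl gm lm Fb Sb s n))"
    using casc_real_denominators_pos[OF chain s]
    by (intro casc_has_value conjI) (simp_all add: order_less_imp_not_eq2)
  then have "has_value_at s (Fract r1 r2)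
      (fst (casc_real n dl gm lm Fb Sb s n) + snd (casc_real n dl gm lm Fb Sb s n))"
    unfolding r(1)[symmetric] rfun_def by (simp add: has_value_at_add)
  from has_value_at_reduced[OF this r(2,3)] show "poly r2 s \<noteq> 0"
    and "poly r1 s / poly r2 s =
           fst (casc_real n dl gm lm Fb Sb s n) + snd (casc_real n dl gm lm Fb Sb s n)"
    by simp_all
qed

lemma derived_parameters_pos:
  assumes "\<forall>i\<in>I. 0 < a0 i \<and> 0 < b0 i \<and> 0 < c0 i \<and> 0 < a1 i \<and> 0 < b1 i \<and> 0 < c1 i"
  shows "\<forall>i\<in>I. 0 < delta a1 b1 c1 i \<and> 0 < gamma c0 a1 b1 c1 i \<and> 0 < lambda a0 b0 c0 a1 b1 c1 i"
  using assms unfolding delta_def gamma_def lambda_def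
  by (auto intro!: mult_pos_pos divide_pos_pos add_pos_pos)

lemma steady_stateD:
  assumes "steady_state n dl gm lm Eb Fb Sb S0 S1 F Y0 Y1" "i \<in> {1..n}"
  shows "Y0 i = gm i * F i * S1 i" "Y1 i = dl i * F i * S1 i"
    and "lm i * F i * S1 i = S0 i * S1 (i - 1)" "Fb i = F i * (1 + dl i * S1 i)"
    and "Sb i = S0 i + S1 i + Y0 i + Y1 i + (if i = n then 0 else Y0 (i + 1))"
  using assms unfolding steady_state_def by (auto simp: algebra_simps)

lemma bmss_F_pos:
  assumes B: "bmss n dl gm lm Eb Fb Sb S0 S1 F Y0 Y1"
    and par: "0 < dl i" and Fb: "0 < Fb i" and i: "i \<in> {1..n}"
  shows "0 < F i"
proof -
  have SS: "steady_state n dl gm lm Eb Fb Sb S0 S1 F Y0 Y1"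
    and nonneg: "0 \<le> F i" "0 \<le> S1 i"
    using B i unfolding bmss_def by auto
  have "Fb i = F i * (1 + dl i * S1 i)"
    by (rule steady_stateD(4)[OF SS i])
  with Fb nonneg show ?thesis
    by (metis less_eq_real_def mult_zero_left)
qed

lemma bmss_flux_pos:
  assumes B: "bmss n dl gm lm Eb Fb Sb S0 S1 F Y0 Y1"
    and par: "0 < dl i" "0 < lm i" and Fb: "0 < Fb i" and i: "i \<in> {1..n}"
    and S1: "0 < S1 i"
  shows "0 < S0 i * S1 (i - 1)"
proof -
  have SS: "steady_state n dl gm lm Eb Fb Sb S0 S1 F Y0 Y1"
    using B unfolding bmss_def by blast
  have "0 < lm i * F i * S1 i"
    using bmss_F_pos[OF B par(1) Fb i] par(2) S1 by simp
  then show ?thesis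
    by (simp only: steady_stateD(3)[OF SS i])
qed

(* In a BMSS all kinases S_0^1 = E, ..., S_n^1 are strictly positive: a zero
   S_i^1 would force the layer-i substrate to sit entirely in the complex
   Y_{i+1}^0, hence S_{i+1}^1 > 0, which in turn forces S_i^1 > 0. *)
lemma bmss_S1_pos:
  assumes B: "bmss n dl gm lm Eb Fb Sb S0 S1 F Y0 Y1"
    and par: "\<forall>i\<in>{1..n}. 0 < dl i \<and> 0 < gm i \<and> 0 < lm i"
    and totals: "0 < Eb" "\<forall>i\<in>{1..n}. 0 < Fb i \<and> 0 < Sb i" and n: "1 \<le> n"
  shows "\<forall>i\<le>n. 0 < S1 i"
proof -
  have SS: "steady_state n dl gm lm Eb Fb Sb S0 S1 F Y0 Y1"
    and nonneg: "\<forall>i\<in>{1..n}. 0 \<le> S0 i \<and> 0 \<le> S1 i \<and> 0 \<le> F i \<and> 0 \<le> Y0 i \<and> 0 \<le> Y1 i"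
    using B unfolding bmss_def by auto
  have S1_nonneg: "0 \<le> S1 i" if "i \<le> n" for i
    using B that unfolding bmss_def by (cases i) auto
  have down: "0 < S1 (i - 1)" if i: "i \<in> {1..n}" and pos: "0 < S1 i" for i
  proof -
    have "0 < S0 i * S1 (i - 1)"
      using bmss_flux_pos[OF B _ _ _ i pos] par totals(2) i by blast
    moreover have "0 \<le> S0 i" "0 \<le> S1 (i - 1)"
      using nonneg S1_nonneg i by auto
    ultimately show ?thesis
      by (metis less_eq_real_def mult_zero_right)
  qed
  have complex_pos: "0 < S1 i" if i: "i \<in> {1..n}" and pos: "0 < Y0 i" for i
    using steady_stateD(1)[OF SS i] pos nonneg i by (metis less_eq_real_def mult_zero_right)
  have E_eq: "Eb = S1 0 + Y0 1"
    using SS unfolding steady_state_def by blast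
  have base: "0 < S1 0"
  proof (rule ccontr)
    assume "\<not> 0 < S1 0"
    then have "0 < Y0 1"
      using E_eq totals(1) S1_nonneg[of 0] by simp
    then show False
      using down complex_pos n \<open>\<not> 0 < S1 0\<close> by force
  qed
  have up: "0 < S1 i" if i: "i \<in> {1..n}" and prev: "0 < S1 (i - 1)" for i
  proof (rule ccontr)
    assume "\<not> 0 < S1 i"
    then have zero: "S1 i = 0"
      using nonneg i by force
    then have "S0 i = 0"
      using steady_stateD(3)[OF SS i] prev by simp
    then have "Sb i = (if i = n then 0 else Y0 (i + 1))"
      using steady_stateD(1,2,5)[OF SS i] zero by simp
    moreover have "0 < Sb i"
      using totals(2) i by blast
    ultimately have "i \<noteq> n" "0 < Y0 (i + 1)"
      by (auto split: if_splits)
    moreover have "i + 1 \<in> {1..n}"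
      using i \<open>i \<noteq> n\<close> by auto
    ultimately show False
      using down complex_pos zero by fastforce
  qed
  show ?thesis
  proof (intro allI impI)
    fix i assume "i \<le> n"
    then show "0 < S1 i"
      by (induction i) (auto simp: base up)
  qed
qed

lemma bmss_steady_chain:
  assumes B: "bmss n dl gm lm Eb Fb Sb S0 S1 F Y0 Y1"
    and par: "\<forall>i\<in>{1..n}. 0 < dl i \<and> 0 < gm i \<and> 0 < lm i"
    and totals: "0 < Eb" "\<forall>i\<in>{1..n}. 0 < Fb i \<and> 0 < Sb i" and n: "1 \<le> n"
  shows "steady_chain n dl gm lm Fb Sb F S1 S0 (\<lambda>i. if i = n then 0 else Y0 (i + 1))"
  unfolding steady_chain_def
proof (intro conjI ballI)
  have SS: "steady_state n dl gm lm Eb Fb Sb S0 S1 F Y0 Y1"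
    using B unfolding bmss_def by blast
  note S1_pos = bmss_S1_pos[OF B par totals n]
  fix i assume i: "i \<in> {1..n}"
  have F_pos: "0 < F i"
    using bmss_F_pos[OF B _ _ i] par totals i by blast
  have "0 < S0 i * S1 (i - 1)"
    using bmss_flux_pos[OF B _ _ _ i] par totals(2) S1_pos i by simp
  moreover have "0 < S1 (i - 1)"
    using S1_pos i by auto
  ultimately have S0_pos: "0 < S0 i"
    by (simp add: zero_less_mult_iff)
  have "0 < dl i" "0 < gm i" "0 < lm i"
    using par i by auto
  moreover have "Sb i = S0 i + S1 i + gm i * F i * S1 i + dl i * F i * S1 i
      + (if i = n then 0 else Y0 (i + 1))"
    using steady_stateD(1,2,5)[OF SS i] by simp
  ultimately show "steady_layer (dl i) (gm i) (lm i) (Fb i) (Sb i) (F i) (S1 i) (S0 i) (S1 (i - 1))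
          (if i = n then 0 else Y0 (i + 1))"
    unfolding steady_layer_def using steady_stateD(3,4)[OF SS i] F_pos S0_pos S1_pos i
    by simp
  have "i - 1 \<noteq> n" "i - 1 + 1 = i"
    using i by auto
  then show "(if i - 1 = n then 0 else Y0 (i - 1 + 1)) = gm i * F i * S1 i"
    using steady_stateD(1)[OF SS i] by simp
qed simp

lemma poly_root_iff_ratio:
  fixes r1 r2 :: "real poly"
  assumes "poly r2 s \<noteq> 0"
  shows "poly (smult Eb r2 - r1) s = 0 \<longleftrightarrow> poly r1 s / poly r2 s = Eb"
  using assms by (auto simp: field_simps)

lemma steady_chain_smallest_root:
  assumes chain: "steady_chain n dl gm lm Fb Sb F S1 S0 C" and S1n: "0 < S1 n"
    and E: "Eb = S1 0 + C 0"
    and r: "rfun n dl gm lm Fb Sb = Fract r1 r2" "r2 \<noteq> 0" "coprime r1 r2"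
  shows "poly (smult Eb r2 - r1) (S1 n) = 0"
    and "0 < s \<Longrightarrow> s < S1 n \<Longrightarrow> poly (smult Eb r2 - r1) s \<noteq> 0"
proof -
  note ratio = rfun_value[OF chain _ _ r]
  have "poly r1 (S1 n) / poly r2 (S1 n) = Eb"
    using ratio(2)[OF S1n order_refl] casc_real_fixed_point[OF chain order_refl] E by simp
  then show "poly (smult Eb r2 - r1) (S1 n) = 0"
    using poly_root_iff_ratio ratio(1)[OF S1n order_refl] by blast
  assume s: "0 < s" "s < S1 n"
  then have "poly r1 s / poly r2 s < Eb"
    using ratio(2)[OF s(1) less_imp_le[OF s(2)]] E
      casc_real_bounds[OF chain s(1) less_imp_le[OF s(2)] order_refl] by simp
  then show "poly (smult Eb r2 - r1) s \<noteq> 0"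
    using poly_root_iff_ratio ratio(1)[OF s(1) less_imp_le[OF s(2)]] by fastforce
qed

theorem mainTheorem10:
  fixes n :: nat
    and a0 b0 c0 a1 b1 c1 :: "nat \<Rightarrow> real"
    and Eb :: real and Fb Sb :: "nat \<Rightarrow> real"
    and S0 S1 F Y0 Y1 :: "nat \<Rightarrow> real"
    and r1 r2 :: "real poly"
  assumes n: "n \<ge> 1"
    and rates: "\<forall>i\<in>{1..n}. a0 i > 0 \<and> b0 i > 0 \<and> c0 i > 0 \<and> a1 i > 0 \<and> b1 i > 0 \<and> c1 i > 0"
    and totals: "Eb > 0" "\<forall>i\<in>{1..n}. Fb i > 0 \<and> Sb i > 0"
    and reduced: "r2 \<noteq> 0" "coprime r1 r2"
    and r_eq: "rfun n (delta a1 b1 c1) (gamma c0 a1 b1 c1) (lambda a0 b0 c0 a1 b1 c1) Fb Sb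
                 = Fract r1 r2"
    and B: "bmss n (delta a1 b1 c1) (gamma c0 a1 b1 c1) (lambda a0 b0 c0 a1 b1 c1) Eb Fb Sb
              S0 S1 F Y0 Y1"
  shows "S1 n > 0 \<and> poly (smult Eb r2 - r1) (S1 n) = 0 \<and>
         (\<forall>s::real. s > 0 \<and> poly (smult Eb r2 - r1) s = 0 \<longrightarrow> S1 n \<le> s)"
proof -
  define dl gm lm where "dl = delta a1 b1 c1" and "gm = gamma c0 a1 b1 c1"
    and "lm = lambda a0 b0 c0 a1 b1 c1"
  define C where "C i = (if i = n then 0 else Y0 (i + 1))" for i
  have par: "\<forall>i\<in>{1..n}. 0 < dl i \<and> 0 < gm i \<and> 0 < lm i"
    unfolding dl_def gm_def lm_def using derived_parameters_pos[OF rates] .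
  note B = B[folded dl_def gm_def lm_def] and r_eq = r_eq[folded dl_def gm_def lm_def]
  have S1n: "0 < S1 n"
    using bmss_S1_pos[OF B par totals n] by simp
  have chain: "steady_chain n dl gm lm Fb Sb F S1 S0 C"
    unfolding C_def using bmss_steady_chain[OF B par totals n] .
  have E: "Eb = S1 0 + C 0"
    using B n unfolding bmss_def steady_state_def C_def by simp
  note root = steady_chain_smallest_root[OF chain S1n E r_eq reduced]
  show ?thesis
    using S1n root by (meson not_le)
qed

end
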